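(* For every real $n\times p$ matrix $X$ with nonzero columns, every $S\subset\{1,\dots,p\}$ and every $s>0$, \[ \phi(S)^2\ge\bar\phi(1)^2-15|S|\,\mathrm{mc}(X),\qquad \bar\phi(s)^2\ge\tilde\phi(s)^2\ge\bar\phi(1)^2-s\,\mathrm{mc}(X). \]
   Context: $X_{\cdot,i}$ is the $i$th column, $\|X\|=\max_i\|X_{\cdot,i}\|_2$, $S_\beta=\{i:\beta_i\ne0\}$, $\beta_S=(\beta_i)_{i\in S}$. $\phi(S)=\inf\{\|X\beta\|_2|S|^{1/2}/(\|X\|\|\beta_S\|_1):\beta\in\mathbb R^p,\|\beta_{S^c}\|_1\le7\|\beta_S\|_1,\beta_S\ne0\}$; $\bar\phi(s)=\inf\{\|X\beta\|_2|S_\beta|^{1/2}/(\|X\|\|\beta\|_1):0\ne|S_\beta|\le s\}$; $\tilde\phi(s)=\inf\{\|X\beta\|_2/(\|X\|\|\beta\|_2):0\ne|S_\beta|\le s\}$; $\mathrm{mc}(X)=\max_{i\ne j}|\langle X_{\cdot,i},X_{\cdot,j}\rangle|/(\|X_{\cdot,i}\|_2\|X_{\cdot,j}\|_2)$. *)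

theory Defs
  imports "HOL-Analysis.Analysis"
begin

text \<open>An n x p real matrix is X :: real^'p^'n (rows indexed by 'n, columns by 'p).\<close>

definition colmax :: "real^'p::finite^'n::finite \<Rightarrow> real" where
  "colmax X = Max (range (\<lambda>i. norm (column i X)))"

definition supp :: "real^'p::finite \<Rightarrow> 'p set" where
  "supp \<beta> = {i. \<beta> $ i \<noteq> 0}"

definition l1on :: "'p::finite set \<Rightarrow> real^'p \<Rightarrow> real" where
  "l1on S \<beta> = (\<Sum>i\<in>S. \<bar>\<beta> $ i\<bar>)"

definition phi :: "real^'p::finite^'n::finite \<Rightarrow> 'p set \<Rightarrow> ereal" where
  "phi X S = (INF \<beta> \<in> {\<beta>. l1on (- S) \<beta> \<le> 7 * l1on S \<beta> \<and> (\<exists>i\<in>S. \<beta> $ i \<noteq> 0)}.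
      ereal (norm (X *v \<beta>) * sqrt (real (card S)) / (colmax X * l1on S \<beta>)))"

definition phibar :: "real^'p::finite^'n::finite \<Rightarrow> nat \<Rightarrow> ereal" where
  "phibar X s = (INF \<beta> \<in> {\<beta>. card (supp \<beta>) \<noteq> 0 \<and> card (supp \<beta>) \<le> s}.
      ereal (norm (X *v \<beta>) * sqrt (real (card (supp \<beta>))) / (colmax X * l1on UNIV \<beta>)))"

definition phitilde :: "real^'p::finite^'n::finite \<Rightarrow> nat \<Rightarrow> ereal" where
  "phitilde X s = (INF \<beta> \<in> {\<beta>. card (supp \<beta>) \<noteq> 0 \<and> card (supp \<beta>) \<le> s}.
      ereal (norm (X *v \<beta>) / (colmax X * norm \<beta>)))"

text \<open>Mutual coherence; the maximum over the empty set (p = 1) is taken to be 0.\<close>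
definition mc :: "real^'p::finite^'n::finite \<Rightarrow> real" where
  "mc X = Max (insert 0 {\<bar>inner (column i X) (column j X)\<bar> / (norm (column i X) * norm (column j X))
                        | i j. i \<noteq> j})"

end

theory Submission
  imports Defs
begin

text \<open>
  Let \<open>b = real_of_ereal (phibar X 1)\<close>, \<open>C = colmax X\<close> and \<open>m = mc X\<close>. Testing phibar X 1
  on the unit vectors gives \<open>b C \<le> \<parallel>X\<^sub>i\<parallel>\<close> for every column, and \<open>|\<langle>X\<^sub>i, X\<^sub>j\<rangle>| \<le> m C\<^sup>2\<close>
  for \<open>i \<noteq> j\<close>. Expanding \<open>\<parallel>X u\<parallel>\<^sup>2\<close> in the Gram matrix of X therefore gives
  \<open>\<parallel>X u\<parallel>\<^sup>2 \<ge> (b\<^sup>2 + m) C\<^sup>2 \<parallel>u\<parallel>\<^sub>2\<^sup>2 - m C\<^sup>2 \<parallel>u\<parallel>\<^sub>1\<^sup>2\<close>, and Cauchy-Schwarz,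
  \<open>\<parallel>u\<parallel>\<^sub>1\<^sup>2 \<le> |supp u| \<parallel>u\<parallel>\<^sub>2\<^sup>2\<close>, turns this into the bound for phitilde X s.
  For phi X S split \<open>\<beta>\<close> into its restrictions u to S and v to the complement of S: the Gram
  bound applies to u, while the cross term \<open>2 \<langle>X u, X v\<rangle>\<close> involves only off-diagonal Gram
  entries and is therefore at most \<open>2 m C\<^sup>2 \<parallel>u\<parallel>\<^sub>1 \<parallel>v\<parallel>\<^sub>1 \<le> 14 m C\<^sup>2 \<parallel>u\<parallel>\<^sub>1\<^sup>2\<close> on the cone;
  together with the term \<open>m C\<^sup>2 \<parallel>u\<parallel>\<^sub>1\<^sup>2\<close> above this gives the constant 15.
  Finally \<open>phitilde X s \<le> phibar X s\<close> is Cauchy-Schwarz again.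
\<close>

lemma sum_abs_power2_le_card_mult_sum_power2:
  fixes u :: "'a \<Rightarrow> real"
  shows "(\<Sum>i\<in>T. \<bar>u i\<bar>)\<^sup>2 \<le> real (card T) * (\<Sum>i\<in>T. (u i)\<^sup>2)"
proof (cases "finite T")
  case True
  have "(\<Sum>i\<in>T. \<bar>u i\<bar>)\<^sup>2 = (\<Sum>i\<in>T. \<Sum>j\<in>T. \<bar>u i\<bar> * \<bar>u j\<bar>)"
    by (simp add: power2_eq_square sum_product)
  also have "\<dots> \<le> (\<Sum>i\<in>T. \<Sum>j\<in>T. ((u i)\<^sup>2 + (u j)\<^sup>2) / 2)"
  proof (intro sum_mono)
    fix i j
    have "0 \<le> (\<bar>u i\<bar> - \<bar>u j\<bar>)\<^sup>2" by simp
    then show "\<bar>u i\<bar> * \<bar>u j\<bar> \<le> ((u i)\<^sup>2 + (u j)\<^sup>2) / 2"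
      by (simp add: power2_eq_square algebra_simps)
  qed
  also have "\<dots> = real (card T) * (\<Sum>i\<in>T. (u i)\<^sup>2)"
    by (simp add: sum.distrib add_divide_distrib sum_divide_distrib[symmetric]
        sum.swap[of "\<lambda>i j. (u j)\<^sup>2"] sum_distrib_left)
  finally show ?thesis .
qed simp

lemma ereal_power2_mono:
  fixes x y :: ereal
  assumes "0 \<le> x" "x \<le> y"
  shows "x\<^sup>2 \<le> y\<^sup>2"
  using assms by (cases x; cases y) (auto intro: power_mono)

lemma ereal_le_INF_power2:
  fixes f :: "'a \<Rightarrow> real"
  assumes "\<And>x. x \<in> A \<Longrightarrow> 0 \<le> f x" "\<And>x. x \<in> A \<Longrightarrow> c \<le> (f x)\<^sup>2"
  shows "ereal c \<le> (INF x\<in>A. ereal (f x))\<^sup>2"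
proof (cases "c \<le> 0")
  case True
  have "0 \<le> (INF x\<in>A. ereal (f x))"
    by (rule INF_greatest) (use assms(1) in simp)
  then have "0 \<le> (INF x\<in>A. ereal (f x))\<^sup>2"
    by simp
  moreover have "ereal c \<le> 0"
    using True by simp
  ultimately show ?thesis
    by (rule order.trans[rotated])
next
  case False
  have "ereal (sqrt c) \<le> (INF x\<in>A. ereal (f x))"
    by (rule INF_greatest) (use assms in \<open>simp add: real_le_lsqrt\<close>)
  from ereal_power2_mono[OF _ this] False show ?thesis
    by simp
qed

lemma quadratic_form_ge:
  fixes g :: "'a::finite \<Rightarrow> 'a \<Rightarrow> real"
  assumes "\<And>i. B \<le> g i i" "\<And>i j. i \<noteq> j \<Longrightarrow> \<bar>g i j\<bar> \<le> M" "0 \<le> M"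
  shows "(B + M) * (\<Sum>i\<in>UNIV. (u i)\<^sup>2) - M * (\<Sum>i\<in>UNIV. \<bar>u i\<bar>)\<^sup>2
      \<le> (\<Sum>i\<in>UNIV. \<Sum>j\<in>UNIV. u i * u j * g i j)"
proof -
  have "(B + M) * (\<Sum>i\<in>UNIV. (u i)\<^sup>2) - M * (\<Sum>i\<in>UNIV. \<bar>u i\<bar>)\<^sup>2
      = (\<Sum>i\<in>UNIV. \<Sum>j\<in>UNIV. (if i = j then (B + M) * (u i)\<^sup>2 else 0) - M * (\<bar>u i\<bar> * \<bar>u j\<bar>))"
  proof -
    have "(\<Sum>i\<in>UNIV. \<bar>u i\<bar>)\<^sup>2 = (\<Sum>i\<in>UNIV. \<Sum>j\<in>UNIV. \<bar>u i\<bar> * \<bar>u j\<bar>)"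
      by (simp only: power2_eq_square sum_product)
    then show ?thesis
      by (simp add: sum_subtractf sum_distrib_left)
  qed
  also have "\<dots> \<le> (\<Sum>i\<in>UNIV. \<Sum>j\<in>UNIV. u i * u j * g i j)"
  proof (intro sum_mono)
    fix i j
    show "(if i = j then (B + M) * (u i)\<^sup>2 else 0) - M * (\<bar>u i\<bar> * \<bar>u j\<bar>) \<le> u i * u j * g i j"
    proof (cases "i = j")
      case True
      have "B * (u i)\<^sup>2 \<le> g i i * (u i)\<^sup>2"
        using assms(1) by (simp add: mult_right_mono)
      then show ?thesis
        using True by (simp add: power2_eq_square algebra_simps)
    next
      case False
      have "\<bar>u i * u j * g i j\<bar> \<le> (\<bar>u i\<bar> * \<bar>u j\<bar>) * M"
        using assms(2)[OF False] by (simp add: abs_mult mult_left_mono)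
      then show ?thesis
        using False by (simp add: algebra_simps)
    qed
  qed
  finally show ?thesis .
qed

lemma abs_bilinear_form_disjoint_le:
  fixes g :: "'a::finite \<Rightarrow> 'a \<Rightarrow> real"
  assumes "\<And>i j. i \<noteq> j \<Longrightarrow> \<bar>g i j\<bar> \<le> M" "\<And>i. u i * v i = 0"
  shows "\<bar>\<Sum>i\<in>UNIV. \<Sum>j\<in>UNIV. u i * v j * g i j\<bar> \<le> M * (\<Sum>i\<in>UNIV. \<bar>u i\<bar>) * (\<Sum>j\<in>UNIV. \<bar>v j\<bar>)"
proof -
  have "\<bar>\<Sum>i\<in>UNIV. \<Sum>j\<in>UNIV. u i * v j * g i j\<bar> \<le> (\<Sum>i\<in>UNIV. \<Sum>j\<in>UNIV. \<bar>u i * v j * g i j\<bar>)"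
    by (rule order_trans[OF sum_abs sum_mono[OF sum_abs]])
  also have "\<dots> \<le> (\<Sum>i\<in>UNIV. \<Sum>j\<in>UNIV. M * (\<bar>u i\<bar> * \<bar>v j\<bar>))"
  proof (intro sum_mono)
    fix i j
    show "\<bar>u i * v j * g i j\<bar> \<le> M * (\<bar>u i\<bar> * \<bar>v j\<bar>)"
    proof (cases "i = j")
      case True
      then show ?thesis
        using assms(2)[of i] by (auto simp: abs_mult)
    next
      case False
      have "\<bar>u i * v j * g i j\<bar> = \<bar>g i j\<bar> * (\<bar>u i\<bar> * \<bar>v j\<bar>)"
        by (simp add: abs_mult)
      also have "\<dots> \<le> M * (\<bar>u i\<bar> * \<bar>v j\<bar>)"
        using assms(1)[OF False] by (simp add: mult_right_mono)
      finally show ?thesis .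
    qed
  qed
  also have "\<dots> = M * (\<Sum>i\<in>UNIV. \<bar>u i\<bar>) * (\<Sum>j\<in>UNIV. \<bar>v j\<bar>)"
    by (simp only: mult.assoc sum_product) (simp only: sum_distrib_left)
  finally show ?thesis .
qed

lemma inner_matrix_vector_mult:
  fixes X :: "real^'p::finite^'n::finite"
  shows "inner (X *v u) (X *v v)
    = (\<Sum>i\<in>UNIV. \<Sum>j\<in>UNIV. u$i * v$j * inner (column i X) (column j X))"
  unfolding matrix_mult_sum scalar_mult_eq_scaleR inner_sum_left
  unfolding inner_sum_right by (simp add: mult.assoc mult.left_commute)

lemma power2_norm_vec: "(norm (x :: real^'n::finite))\<^sup>2 = (\<Sum>i\<in>UNIV. (x$i)\<^sup>2)"
  unfolding power2_norm_eq_inner by (simp add: inner_vec_def power2_eq_square)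

lemma norm_column_le_colmax: "norm (column i X) \<le> colmax X"
  unfolding colmax_def by (rule Max_ge) auto

lemma colmax_nonneg: "0 \<le> colmax X"
  using norm_column_le_colmax[of undefined X] norm_ge_zero order_trans by blast

lemma colmax_pos: "column i X \<noteq> 0 \<Longrightarrow> 0 < colmax X"
  using norm_column_le_colmax[of i X] by (metis zero_less_norm_iff order_less_le_trans)

lemma finite_column_coherences:
  "finite {\<bar>inner (column i X) (column j X)\<bar> / (norm (column i X) * norm (column j X)) | i j. i \<noteq> j}"
  by (rule finite_subset[where B = "(\<lambda>(i, j). \<bar>inner (column i X) (column j X)\<bar>
      / (norm (column i X) * norm (column j X))) ` UNIV"]) auto

lemma mc_nonneg: "0 \<le> mc X"
  unfolding mc_def by (rule Max_ge) (simp_all add: finite_column_coherences)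

lemma column_coherence_le_mc:
  "i \<noteq> j \<Longrightarrow> \<bar>inner (column i X) (column j X)\<bar> / (norm (column i X) * norm (column j X)) \<le> mc X"
  unfolding mc_def by (rule Max_ge) (auto simp add: finite_column_coherences)

lemma abs_inner_columns_le:
  assumes "column i X \<noteq> 0" "column j X \<noteq> 0" "i \<noteq> j"
  shows "\<bar>inner (column i X) (column j X)\<bar> \<le> mc X * (colmax X)\<^sup>2"
proof -
  have "\<bar>inner (column i X) (column j X)\<bar> \<le> mc X * (norm (column i X) * norm (column j X))"
    using column_coherence_le_mc[OF assms(3), of X] assms(1,2) by (simp add: divide_le_eq mult.commute)
  also have "\<dots> \<le> mc X * (colmax X * colmax X)"
    by (intro mult_left_mono mult_mono norm_column_le_colmax mc_nonneg colmax_nonneg) auto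
  finally show ?thesis
    by (simp add: power2_eq_square)
qed

lemma l1on_nonneg: "0 \<le> l1on S \<beta>"
  by (simp add: l1on_def sum_nonneg)

lemma phibar_nonneg: "0 \<le> phibar X s"
  unfolding phibar_def
  by (rule INF_greatest) (simp add: l1on_nonneg colmax_nonneg)

lemma phitilde_nonneg: "0 \<le> phitilde X s"
  unfolding phitilde_def
  by (rule INF_greatest) (simp add: colmax_nonneg)

lemma phibar_1_le_norm_column: "phibar X 1 \<le> ereal (norm (column i X) / colmax X)"
proof -
  let ?e = "axis i (1::real)"
  have supp: "supp ?e = {i}"
    by (auto simp: supp_def axis_def)
  have "phibar X 1 \<le> ereal (norm (X *v ?e) * sqrt (real (card (supp ?e))) / (colmax X * l1on UNIV ?e))"
    unfolding phibar_def by (rule INF_lower) (simp add: supp)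
  moreover have "l1on UNIV ?e = 1"
    by (simp add: l1on_def axis_def)
  ultimately show ?thesis
    by (simp add: supp matrix_vector_mult_basis)
qed

lemma phibar_1_mult_colmax_le_norm_column:
  fixes X :: "real^'p::finite^'n::finite"
  assumes "0 < colmax X"
  shows "real_of_ereal (phibar X 1) * colmax X \<le> norm (column i X)"
proof -
  have "phibar X 1 = ereal (real_of_ereal (phibar X 1))"
    using phibar_1_le_norm_column[of X i] phibar_nonneg[of X 1] by (cases "phibar X 1") auto
  then have "real_of_ereal (phibar X 1) \<le> norm (column i X) / colmax X"
    using phibar_1_le_norm_column[of X i] by (metis ereal_less_eq(3))
  then show ?thesis
    using assms by (simp add: le_divide_eq)
qed

lemma l1on_UNIV_power2_le_card_supp: "(l1on UNIV \<beta>)\<^sup>2 \<le> real (card (supp \<beta>)) * (norm \<beta>)\<^sup>2"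
proof -
  have l1: "l1on UNIV \<beta> = (\<Sum>i\<in>supp \<beta>. \<bar>\<beta>$i\<bar>)"
    unfolding l1on_def by (rule sum.mono_neutral_right) (auto simp: supp_def)
  have norm: "(norm \<beta>)\<^sup>2 = (\<Sum>i\<in>supp \<beta>. (\<beta>$i)\<^sup>2)"
    unfolding power2_norm_vec by (rule sum.mono_neutral_right) (auto simp: supp_def)
  show ?thesis
    unfolding l1 norm by (rule sum_abs_power2_le_card_mult_sum_power2)
qed

lemma l1on_UNIV_le_sqrt_card_supp: "l1on UNIV \<beta> \<le> sqrt (real (card (supp \<beta>))) * norm \<beta>"
proof (rule power2_le_imp_le)
  show "(l1on UNIV \<beta>)\<^sup>2 \<le> (sqrt (real (card (supp \<beta>))) * norm \<beta>)\<^sup>2"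
    using l1on_UNIV_power2_le_card_supp[of \<beta>] by (simp add: power_mult_distrib)
qed simp

definition vec_restrict :: "'p set \<Rightarrow> real^'p \<Rightarrow> real^'p" where
  "vec_restrict S \<beta> = (\<chi> i. if i \<in> S then \<beta>$i else 0)"

lemma vec_restrict_add_compl: "vec_restrict S \<beta> + vec_restrict (- S) \<beta> = \<beta>"
  by (simp add: vec_restrict_def vec_eq_iff)

lemma l1on_UNIV_vec_restrict: "l1on UNIV (vec_restrict S \<beta>) = l1on S \<beta>"
  unfolding l1on_def vec_restrict_def by (simp add: if_distrib sum.If_cases)

lemma supp_vec_restrict: "supp (vec_restrict S \<beta>) \<subseteq> S"
  by (auto simp: supp_def vec_restrict_def)

lemma norm_matrix_vector_mult_power2_ge:
  fixes X :: "real^'p::finite^'n::finite"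
  assumes "\<forall>i. column i X \<noteq> 0"
  shows "((real_of_ereal (phibar X 1))\<^sup>2 + mc X) * (colmax X)\<^sup>2 * (norm u)\<^sup>2
      - mc X * (colmax X)\<^sup>2 * (l1on UNIV u)\<^sup>2 \<le> (norm (X *v u))\<^sup>2"
proof -
  let ?b = "real_of_ereal (phibar X 1)"
  have coeff: "(?b\<^sup>2 + mc X) * (colmax X)\<^sup>2 = (?b * colmax X)\<^sup>2 + mc X * (colmax X)\<^sup>2"
    by (simp add: algebra_simps)
  have gram: "(norm (X *v u))\<^sup>2 = (\<Sum>i\<in>UNIV. \<Sum>j\<in>UNIV. u$i * u$j * inner (column i X) (column j X))"
    by (simp add: power2_norm_eq_inner inner_matrix_vector_mult)
  show ?thesis
    unfolding coeff gram power2_norm_vec[of u] l1on_def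
  proof (rule quadratic_form_ge)
    fix i
    have "0 < colmax X"
      using assms colmax_pos by blast
    then have "(?b * colmax X)\<^sup>2 \<le> (norm (column i X))\<^sup>2"
      using phibar_1_mult_colmax_le_norm_column
      by (intro power_mono) (simp_all add: real_of_ereal_pos phibar_nonneg colmax_nonneg)
    then show "(?b * colmax X)\<^sup>2 \<le> inner (column i X) (column i X)"
      by (simp add: power2_norm_eq_inner)
  next
    fix i j :: 'p
    assume "i \<noteq> j"
    then show "\<bar>inner (column i X) (column j X)\<bar> \<le> mc X * (colmax X)\<^sup>2"
      using abs_inner_columns_le assms by blast
  qed (simp add: mc_nonneg)
qed

lemma abs_inner_matrix_vector_mult_disjoint_le:
  fixes X :: "real^'p::finite^'n::finite"
  assumes "\<forall>i. column i X \<noteq> 0" "\<And>i. u$i * v$i = 0"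
  shows "\<bar>inner (X *v u) (X *v v)\<bar> \<le> mc X * (colmax X)\<^sup>2 * l1on UNIV u * l1on UNIV v"
  unfolding inner_matrix_vector_mult l1on_def
proof (rule abs_bilinear_form_disjoint_le)
  fix i j :: 'p
  assume "i \<noteq> j"
  then show "\<bar>inner (column i X) (column j X)\<bar> \<le> mc X * (colmax X)\<^sup>2"
    using abs_inner_columns_le assms(1) by blast
qed (rule assms(2))

lemma l1on_pos: "i \<in> S \<Longrightarrow> \<beta>$i \<noteq> 0 \<Longrightarrow> 0 < l1on S \<beta>"
  unfolding l1on_def by (rule sum_pos2[of _ i]) auto

lemma le_power2_divide:
  fixes c d N :: real
  assumes "0 < d" "c * d\<^sup>2 \<le> N\<^sup>2"
  shows "c \<le> (N / d)\<^sup>2"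
  using assms by (simp add: power_divide le_divide_eq)

lemma phitilde_le_phibar:
  fixes X :: "real^'p::finite^'n::finite"
  assumes "0 < colmax X"
  shows "phitilde X s \<le> phibar X s"
  unfolding phitilde_def phibar_def
proof (rule INF_mono)
  fix \<beta> :: "real^'p"
  assume \<beta>: "\<beta> \<in> {\<beta>. card (supp \<beta>) \<noteq> 0 \<and> card (supp \<beta>) \<le> s}"
  let ?k = "real (card (supp \<beta>))"
  obtain i where "\<beta>$i \<noteq> 0"
    using \<beta> by (auto simp: supp_def)
  then have l1_pos: "0 < l1on UNIV \<beta>"
    by (simp add: l1on_pos)
  have k_pos: "0 < ?k"
    using \<beta> by (simp del: card_0_eq)
  have "norm (X *v \<beta>) / (colmax X * norm \<beta>)
      = norm (X *v \<beta>) * sqrt ?k / (colmax X * (sqrt ?k * norm \<beta>))"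
    using k_pos by (simp del: card_0_eq)
  also have "\<dots> \<le> norm (X *v \<beta>) * sqrt ?k / (colmax X * l1on UNIV \<beta>)"
    by (rule frac_le) (use assms l1_pos l1on_UNIV_le_sqrt_card_supp in auto)
  finally show "\<exists>\<beta>'\<in>{\<beta>. card (supp \<beta>) \<noteq> 0 \<and> card (supp \<beta>) \<le> s}.
      ereal (norm (X *v \<beta>') / (colmax X * norm \<beta>'))
      \<le> ereal (norm (X *v \<beta>) * sqrt ?k / (colmax X * l1on UNIV \<beta>))"
    using \<beta> by auto
qed

lemma sparse_ratio_power2_ge:
  fixes X :: "real^'p::finite^'n::finite"
  assumes "\<forall>i. column i X \<noteq> 0" "\<beta> \<noteq> 0" "card (supp \<beta>) \<le> s"
  shows "(real_of_ereal (phibar X 1))\<^sup>2 - real s * mc X \<le> (norm (X *v \<beta>) / (colmax X * norm \<beta>))\<^sup>2"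
proof (rule le_power2_divide)
  let ?b = "real_of_ereal (phibar X 1)" and ?C = "colmax X" and ?m = "mc X"
  have "0 < ?C"
    using assms(1) colmax_pos by blast
  then show "0 < ?C * norm \<beta>"
    using assms(2) by simp
  have "(l1on UNIV \<beta>)\<^sup>2 \<le> real s * (norm \<beta>)\<^sup>2"
    using l1on_UNIV_power2_le_card_supp[of \<beta>] assms(3)
    by (meson of_nat_le_iff mult_right_mono order_trans zero_le_power2)
  then have "?m * ?C\<^sup>2 * (l1on UNIV \<beta>)\<^sup>2 \<le> ?m * ?C\<^sup>2 * (real s * (norm \<beta>)\<^sup>2)"
    by (simp add: mc_nonneg mult_left_mono)
  moreover have "0 \<le> ?m * ?C\<^sup>2 * (norm \<beta>)\<^sup>2"
    by (simp add: mc_nonneg)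
  ultimately show "(?b\<^sup>2 - real s * ?m) * (?C * norm \<beta>)\<^sup>2 \<le> (norm (X *v \<beta>))\<^sup>2"
    using norm_matrix_vector_mult_power2_ge[OF assms(1), of \<beta>]
    by (simp add: algebra_simps)
qed

lemma cone_ratio_power2_ge:
  fixes X :: "real^'p::finite^'n::finite"
  assumes "\<forall>i. column i X \<noteq> 0" "l1on (- S) \<beta> \<le> 7 * l1on S \<beta>" "i \<in> S" "\<beta>$i \<noteq> 0"
  shows "(real_of_ereal (phibar X 1))\<^sup>2 - 15 * real (card S) * mc X
    \<le> (norm (X *v \<beta>) * sqrt (real (card S)) / (colmax X * l1on S \<beta>))\<^sup>2"
proof (rule le_power2_divide)
  let ?b = "real_of_ereal (phibar X 1)" and ?C = "colmax X" and ?m = "mc X"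
    and ?k = "real (card S)" and ?a = "l1on S \<beta>"
  define u where "u = vec_restrict S \<beta>"
  define v where "v = vec_restrict (- S) \<beta>"
  have C_pos: "0 < ?C"
    using assms(1) colmax_pos by blast
  have a_pos: "0 < ?a"
    using assms(3,4) by (rule l1on_pos)
  have k_pos: "0 < ?k"
    using assms(3) by (auto simp: card_gt_0_iff)
  show "0 < ?C * ?a"
    using C_pos a_pos by simp
  have a_le: "?a\<^sup>2 \<le> ?k * (norm u)\<^sup>2"
  proof -
    have "card (supp u) \<le> card S"
      unfolding u_def by (rule card_mono) (simp_all add: supp_vec_restrict)
    then show ?thesis
      using l1on_UNIV_power2_le_card_supp[of u]
      by (simp add: u_def l1on_UNIV_vec_restrict)
        (meson of_nat_le_iff mult_right_mono order_trans zero_le_power2)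
  qed
  have cross: "\<bar>inner (X *v u) (X *v v)\<bar> \<le> 7 * (?m * ?C\<^sup>2 * ?a\<^sup>2)"
  proof -
    have disjoint: "u$j * v$j = 0" for j
      by (simp add: u_def v_def vec_restrict_def)
    have "\<bar>inner (X *v u) (X *v v)\<bar> \<le> ?m * ?C\<^sup>2 * l1on UNIV u * l1on UNIV v"
      by (rule abs_inner_matrix_vector_mult_disjoint_le[OF assms(1) disjoint])
    also have "\<dots> = ?m * ?C\<^sup>2 * ?a * l1on (- S) \<beta>"
      by (simp add: u_def v_def l1on_UNIV_vec_restrict)
    also have "\<dots> \<le> ?m * ?C\<^sup>2 * ?a * (7 * ?a)"
      using assms(2) a_pos by (intro mult_left_mono) (simp_all add: mc_nonneg)
    finally show ?thesis
      by (simp add: power2_eq_square)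
  qed
  have split: "(norm (X *v u))\<^sup>2 - 2 * \<bar>inner (X *v u) (X *v v)\<bar> \<le> (norm (X *v \<beta>))\<^sup>2"
  proof -
    have "X *v \<beta> = X *v u + X *v v"
      unfolding u_def v_def by (simp add: matrix_vector_right_distrib[symmetric] vec_restrict_add_compl)
    then have "(norm (X *v \<beta>))\<^sup>2 = (norm (X *v u))\<^sup>2 + 2 * inner (X *v u) (X *v v) + (norm (X *v v))\<^sup>2"
      by (simp add: power2_norm_eq_inner inner_add_left inner_add_right inner_commute)
    then show ?thesis
      using zero_le_power2[of "norm (X *v v)"] abs_ge_minus_self[of "inner (X *v u) (X *v v)"]
      by linarith
  qed
  have "(?b\<^sup>2 + ?m) * ?C\<^sup>2 * (norm u)\<^sup>2 - 15 * (?m * ?C\<^sup>2 * ?a\<^sup>2) \<le> (norm (X *v \<beta>))\<^sup>2"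
    using norm_matrix_vector_mult_power2_ge[OF assms(1), of u] split cross
    by (simp add: u_def l1on_UNIV_vec_restrict)
  then have "?k * ((?b\<^sup>2 + ?m) * ?C\<^sup>2 * (norm u)\<^sup>2 - 15 * (?m * ?C\<^sup>2 * ?a\<^sup>2))
      \<le> ?k * (norm (X *v \<beta>))\<^sup>2"
    using k_pos by (intro mult_left_mono) auto
  moreover have "(?b\<^sup>2 + ?m) * ?C\<^sup>2 * ?a\<^sup>2 \<le> ?k * ((?b\<^sup>2 + ?m) * ?C\<^sup>2 * (norm u)\<^sup>2)"
    using mult_left_mono[OF a_le, of "(?b\<^sup>2 + ?m) * ?C\<^sup>2"] by (simp add: mc_nonneg algebra_simps)
  moreover have "0 \<le> ?m * ?C\<^sup>2 * ?a\<^sup>2"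
    by (simp add: mc_nonneg)
  ultimately show "(?b\<^sup>2 - 15 * ?k * ?m) * (?C * ?a)\<^sup>2 \<le> (norm (X *v \<beta>) * sqrt ?k)\<^sup>2"
    using k_pos by (simp add: algebra_simps)
qed

theorem lemma1:
  fixes X :: "real^'p::finite^'n::finite" and S :: "'p set" and s :: nat
  assumes "\<forall>i. column i X \<noteq> 0"
    and "s > 0"
  shows "phi X S ^ 2 \<ge> ereal ((real_of_ereal (phibar X 1))^2 - 15 * real (card S) * mc X)
    \<and> phibar X s ^ 2 \<ge> phitilde X s ^ 2
    \<and> phitilde X s ^ 2 \<ge> ereal ((real_of_ereal (phibar X 1))^2 - real s * mc X)"
proof (intro conjI)
  show "ereal ((real_of_ereal (phibar X 1))\<^sup>2 - 15 * real (card S) * mc X) \<le> phi X S ^ 2"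
    unfolding phi_def
    by (rule ereal_le_INF_power2)
      (use cone_ratio_power2_ge[OF assms(1)] in \<open>auto simp: l1on_nonneg colmax_nonneg\<close>)
  show "phitilde X s ^ 2 \<le> phibar X s ^ 2"
    using assms(1) colmax_pos by (blast intro: ereal_power2_mono phitilde_nonneg phitilde_le_phibar)
  have nonzero: "\<beta> \<noteq> 0" if "card (supp \<beta>) \<noteq> 0" for \<beta> :: "real^'p"
    using that by (auto simp: supp_def)
  show "ereal ((real_of_ereal (phibar X 1))\<^sup>2 - real s * mc X) \<le> phitilde X s ^ 2"
    unfolding phitilde_def
    by (rule ereal_le_INF_power2)
      (use sparse_ratio_power2_ge[OF assms(1)] nonzero in \<open>auto simp: colmax_nonneg\<close>)
qed

end
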